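(* For every $\theta,\bar\theta\in\mathbb R^m$ there exists a stochastic policy $\mu_{\theta,\bar\theta}$ such that \[ T_\alpha(\theta)-T_\alpha(\bar\theta)=A_{\mu_{\theta,\bar\theta}}(\theta-\bar\theta). \] In particular, suppose $\theta^\star$ is a projected Bellman fixed point, $\theta_{k+1}=T_\alpha(\theta_k)$, and $x_k:=\theta_k-\theta^\star$. Then $x_{k+1}=A_{\mu_k}x_k$ for all $k\ge0$, where each $\mu_k$ is a stochastic policy depending measurably on $(\theta_k,\theta^\star)$.
   Context: Consider a finite discounted MDP with state space $\mathcal S=\{1,\dots,|\mathcal S|\}$, action space $\mathcal A=\{1,\dots,|\mathcal A|\}$, transition probabilities $P(s'\mid s,a)$, expected reward $R(s,a)$, and discount factor $\gamma\in(0,1)$. State-action vectors are ordered as $(1,1),(2,1),\dots,(|\mathcal S|,1),(1,2),\dots$. The matrix $P\in\mathbb R^{|\mathcal S||\mathcal A|\times|\mathcal S|}$ has rows $P(\cdot\mid s,a)$, and $R$ has entries $R(s,a)$. A stochastic policy is a map $\mu:\mathcal S\to\Delta_{|\mathcal A|}$, where $\Delta_{|\mathcal A|}$ is the probability simplex. The matrix $\Pi^\mu\in\mathbb R^{|\mathcal S|\times|\mathcal S||\mathcal A|}$ has entry $\mu(a\mid s)$ in row $s$, column $(s,a)$, and zeros elsewhere. The feature matrix $\Phi\in\mathbb R^{|\mathcal S||\mathcal A|\times m}$ has full column rank and rows $\phi(s,a)^\top$. Define $V_\theta(s):=\max_a\phi(s,a)^\top\theta$. The distribution $d$ on $\mathcal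 S\times\mathcal A$ satisfies $d>0$ everywhere, and $D=\mathrm{diag}(d)$. The step size is $\alpha\in(0,1)$. Define $g(\theta):=\Phi^\top D(R+\gamma PV_\theta-\Phi\theta)$ and $T_\alpha(\theta):=\theta+\alpha g(\theta)$. A projected Bellman fixed point is a $\theta^\star$ with $g(\theta^\star)=0$. For a stochastic policy $\mu$, define $A_\mu:=I-\alpha\Phi^\top D\Phi+\alpha\gamma\Phi^\top DP\Pi^\mu\Phi$. *)

theory Defs
  imports "HOL-Analysis.Analysis"
begin

definition diag_mat :: "real ^ 'n \<Rightarrow> real ^ 'n ^ 'n" where
  "diag_mat d = (\<chi> i j. if i = j then d $ i else 0)"

definition stochastic_policy :: "('s::finite \<Rightarrow> 'a::finite \<Rightarrow> real) \<Rightarrow> bool" where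
  "stochastic_policy \<mu> \<longleftrightarrow> (\<forall>s a. 0 \<le> \<mu> s a) \<and> (\<forall>s. (\<Sum>a\<in>UNIV. \<mu> s a) = 1)"

definition transition_matrix :: "real ^ 's ^ ('s::finite \<times> 'a::finite) \<Rightarrow> bool" where
  "transition_matrix P \<longleftrightarrow> (\<forall>sa s'. 0 \<le> P $ sa $ s') \<and> (\<forall>sa. (\<Sum>s'\<in>UNIV. P $ sa $ s') = 1)"

definition Pi_mat :: "('s::finite \<Rightarrow> 'a::finite \<Rightarrow> real) \<Rightarrow> real ^ ('s \<times> 'a) ^ 's" where
  "Pi_mat \<mu> = (\<chi> s sa. if fst sa = s then \<mu> s (snd sa) else 0)"

definition Vtheta :: "real ^ 'm ^ ('s::finite \<times> 'a::finite) \<Rightarrow> real ^ 'm \<Rightarrow> real ^ 's" where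
  "Vtheta \<Phi> \<theta> = (\<chi> s. Max ((\<lambda>a. (\<Phi> $ (s, a)) \<bullet> \<theta>) ` UNIV))"

definition gmap :: "real ^ 'm ^ ('s::finite \<times> 'a::finite) \<Rightarrow> real ^ ('s \<times> 'a) \<Rightarrow> real ^ 's ^ ('s \<times> 'a)
   \<Rightarrow> real ^ ('s \<times> 'a) \<Rightarrow> real \<Rightarrow> real ^ 'm \<Rightarrow> real ^ 'm" where
  "gmap \<Phi> d P R \<gamma> \<theta> =
     (transpose \<Phi> ** diag_mat d) *v (R + \<gamma> *\<^sub>R (P *v Vtheta \<Phi> \<theta>) - \<Phi> *v \<theta>)"

definition Tmap :: "real ^ 'm ^ ('s::finite \<times> 'a::finite) \<Rightarrow> real ^ ('s \<times> 'a) \<Rightarrow> real ^ 's ^ ('s \<times> 'a)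
   \<Rightarrow> real ^ ('s \<times> 'a) \<Rightarrow> real \<Rightarrow> real \<Rightarrow> real ^ 'm \<Rightarrow> real ^ 'm" where
  "Tmap \<Phi> d P R \<gamma> \<alpha> \<theta> = \<theta> + \<alpha> *\<^sub>R gmap \<Phi> d P R \<gamma> \<theta>"

definition Amat :: "real ^ 'm ^ ('s::finite \<times> 'a::finite) \<Rightarrow> real ^ ('s \<times> 'a) \<Rightarrow> real ^ 's ^ ('s \<times> 'a)
   \<Rightarrow> real \<Rightarrow> real \<Rightarrow> ('s \<Rightarrow> 'a \<Rightarrow> real) \<Rightarrow> real ^ 'm ^ 'm" where
  "Amat \<Phi> d P \<gamma> \<alpha> \<mu> =
     mat 1 - \<alpha> *\<^sub>R (transpose \<Phi> ** diag_mat d ** \<Phi>)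
       + (\<alpha> * \<gamma>) *\<^sub>R (transpose \<Phi> ** diag_mat d ** P ** Pi_mat \<mu> ** \<Phi>)"

end

theory Submission
  imports Defs
begin

text \<open>For every state s, the difference V\<theta>(s) - V\<theta>b(s) lies between the smallest
  and the largest of the numbers \<phi>(s,a)\<bullet>(\<theta> - \<theta>b): evaluate both maxima at a
  maximiser of either side. Hence it is a convex combination of these numbers, i.e.
  \<Pi>(\<mu>) \<Phi> (\<theta> - \<theta>b) = V\<theta> - V\<theta>b for a stochastic policy \<mu>, and then
  T(\<theta>) - T(\<theta>b) = A(\<mu>) (\<theta> - \<theta>b) is linear algebra. Choosing the convex weights by one
  explicit rational formula in the data makes \<mu> a Borel function of (\<theta>, \<theta>b).\<close>

text \<open>With u = max (c - t) 0 and v = max (t - c) 0, the weights (\<Sum> u^2) v + (\<Sum> v^2) u have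
  zero moment about t because c - t = u - v and u v = 0. The indicator of c = t adds nothing
  to the moment but keeps the total weight positive when t is an extreme value of c.\<close>
definition balancing_weight :: "('a::finite \<Rightarrow> real) \<Rightarrow> real \<Rightarrow> 'a \<Rightarrow> real" where
  "balancing_weight c t a =
     (\<Sum>b\<in>UNIV. (max (c b - t) 0)\<^sup>2) * max (t - c a) 0
   + (\<Sum>b\<in>UNIV. (max (t - c b) 0)\<^sup>2) * max (c a - t) 0
   + (if c a = t then 1 else 0)"

definition interpolating_weights :: "('a::finite \<Rightarrow> real) \<Rightarrow> real \<Rightarrow> 'a \<Rightarrow> real" where
  "interpolating_weights c t a = balancing_weight c t a / (\<Sum>b\<in>UNIV. balancing_weight c t b)"

lemma balancing_weight_nonneg: "0 \<le> balancing_weight c t a"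
  unfolding balancing_weight_def by (simp add: sum_nonneg)

lemma balancing_weight_moment:
  fixes c :: "'a::finite \<Rightarrow> real"
  shows "(\<Sum>a\<in>UNIV. balancing_weight c t a * (c a - t)) = 0"
proof -
  define u where "u b = max (c b - t) 0" for b
  define v where "v b = max (t - c b) 0" for b
  have "balancing_weight c t a * (c a - t)
          = (\<Sum>b\<in>UNIV. (v b)\<^sup>2) * (u a)\<^sup>2 - (\<Sum>b\<in>UNIV. (u b)\<^sup>2) * (v a)\<^sup>2" for a
    by (cases "c a \<le> t")
       (auto simp: balancing_weight_def u_def v_def max_def power2_eq_square algebra_simps)
  then show ?thesis
    by (simp add: sum_subtractf sum_distrib_left[symmetric])
qed

lemma sum_balancing_weight_pos:
  fixes c :: "'a::finite \<Rightarrow> real"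
  assumes "c a1 \<le> t" "t \<le> c a2"
  shows "0 < (\<Sum>a\<in>UNIV. balancing_weight c t a)"
proof (cases "\<exists>a. c a = t")
  case True
  then obtain a0 where "c a0 = t" by blast
  then have "0 < balancing_weight c t a0"
    by (simp add: balancing_weight_def add_nonneg_pos sum_nonneg)
  then show ?thesis
    by (intro sum_pos2[where i = a0]) (auto intro: balancing_weight_nonneg)
next
  case False
  with assms have below: "c a1 < t" and above: "t < c a2"
    by (auto simp: order.order_iff_strict)
  have "0 < (\<Sum>b\<in>UNIV. (max (c b - t) 0)\<^sup>2)"
    using above by (intro sum_pos2[where i = a2]) auto
  with below have "0 < balancing_weight c t a1"
    by (simp add: balancing_weight_def add_pos_nonneg sum_nonneg)
  then show ?thesis
    by (intro sum_pos2[where i = a1]) (auto intro: balancing_weight_nonneg)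
qed

lemma interpolating_weights:
  fixes c :: "'a::finite \<Rightarrow> real"
  assumes "c a1 \<le> t" "t \<le> c a2"
  shows "0 \<le> interpolating_weights c t a"
    and "(\<Sum>a\<in>UNIV. interpolating_weights c t a) = 1"
    and "(\<Sum>a\<in>UNIV. interpolating_weights c t a * c a) = t"
proof -
  define Z where "Z = (\<Sum>a\<in>UNIV. balancing_weight c t a)"
  have Z: "0 < Z"
    unfolding Z_def using assms by (rule sum_balancing_weight_pos)
  show "0 \<le> interpolating_weights c t a"
    unfolding interpolating_weights_def Z_def[symmetric] using Z
    by (simp add: balancing_weight_nonneg)
  show sum_one: "(\<Sum>a\<in>UNIV. interpolating_weights c t a) = 1"
    unfolding interpolating_weights_def sum_divide_distrib[symmetric] Z_def[symmetric] using Z by simp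
  have "(\<Sum>a\<in>UNIV. interpolating_weights c t a * (c a - t))
          = (\<Sum>a\<in>UNIV. balancing_weight c t a * (c a - t)) / Z"
    by (simp add: interpolating_weights_def Z_def sum_divide_distrib)
  then have "(\<Sum>a\<in>UNIV. interpolating_weights c t a * (c a - t)) = 0"
    by (simp add: balancing_weight_moment)
  then show "(\<Sum>a\<in>UNIV. interpolating_weights c t a * c a) = t"
    using sum_one by (simp add: right_diff_distrib sum_subtractf sum_distrib_right[symmetric])
qed

lemma Vtheta_attained: "\<exists>a. Vtheta \<Phi> \<theta> $ s = (\<Phi> $ (s, a)) \<bullet> \<theta>"
proof -
  have "Max ((\<lambda>a. (\<Phi> $ (s, a)) \<bullet> \<theta>) ` UNIV) \<in> (\<lambda>a. (\<Phi> $ (s, a)) \<bullet> \<theta>) ` UNIV"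
    by (rule Max_in) auto
  then obtain a where "Max ((\<lambda>a. (\<Phi> $ (s, a)) \<bullet> \<theta>) ` UNIV) = (\<Phi> $ (s, a)) \<bullet> \<theta>"
    by blast
  then show ?thesis by (auto simp: Vtheta_def)
qed

lemma Vtheta_ge: "(\<Phi> $ (s, a)) \<bullet> \<theta> \<le> Vtheta \<Phi> \<theta> $ s"
  by (auto simp: Vtheta_def intro!: Max_ge)

lemma Vtheta_diff_between:
  obtains a1 a2 where "(\<Phi> $ (s, a1)) \<bullet> (\<theta> - \<theta>b) \<le> Vtheta \<Phi> \<theta> $ s - Vtheta \<Phi> \<theta>b $ s"
    and "Vtheta \<Phi> \<theta> $ s - Vtheta \<Phi> \<theta>b $ s \<le> (\<Phi> $ (s, a2)) \<bullet> (\<theta> - \<theta>b)"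
proof -
  obtain a1 where a1: "Vtheta \<Phi> \<theta>b $ s = (\<Phi> $ (s, a1)) \<bullet> \<theta>b"
    using Vtheta_attained by blast
  obtain a2 where a2: "Vtheta \<Phi> \<theta> $ s = (\<Phi> $ (s, a2)) \<bullet> \<theta>"
    using Vtheta_attained by blast
  show thesis
    by (rule that[of a1 a2])
       (use a1 a2 Vtheta_ge[of \<Phi> s a1 \<theta>] Vtheta_ge[of \<Phi> s a2 \<theta>b] in \<open>auto simp: inner_diff_right\<close>)
qed

definition Vtheta_diff_policy ::
    "real ^ 'm ^ ('s::finite \<times> 'a::finite) \<Rightarrow> real ^ 'm \<Rightarrow> real ^ 'm \<Rightarrow> 's \<Rightarrow> 'a \<Rightarrow> real" where
  "Vtheta_diff_policy \<Phi> \<theta> \<theta>b s =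
     interpolating_weights (\<lambda>a. (\<Phi> $ (s, a)) \<bullet> (\<theta> - \<theta>b)) (Vtheta \<Phi> \<theta> $ s - Vtheta \<Phi> \<theta>b $ s)"

lemma Vtheta_diff_policy:
  shows "0 \<le> Vtheta_diff_policy \<Phi> \<theta> \<theta>b s a"
    and "(\<Sum>a\<in>UNIV. Vtheta_diff_policy \<Phi> \<theta> \<theta>b s a) = 1"
    and "(\<Sum>a\<in>UNIV. Vtheta_diff_policy \<Phi> \<theta> \<theta>b s a * ((\<Phi> $ (s, a)) \<bullet> (\<theta> - \<theta>b)))
           = Vtheta \<Phi> \<theta> $ s - Vtheta \<Phi> \<theta>b $ s"
  by (rule Vtheta_diff_between[of \<Phi> s \<theta> \<theta>b],
      simp_all add: Vtheta_diff_policy_def interpolating_weights)+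

lemma stochastic_policy_Vtheta_diff_policy: "stochastic_policy (Vtheta_diff_policy \<Phi> \<theta> \<theta>b)"
  by (simp add: stochastic_policy_def Vtheta_diff_policy)

lemma borel_measurable_Vtheta_diff_policy:
  "(\<lambda>p. Vtheta_diff_policy \<Phi> (fst p) (snd p) s a) \<in> borel_measurable borel"
  unfolding Vtheta_diff_policy_def interpolating_weights_def balancing_weight_def
    Vtheta_def vec_lambda_beta
  by (subst borel_prod[symmetric]) measurable

lemma Pi_mat_mult_vec: "(Pi_mat \<mu> *v y) $ s = (\<Sum>a\<in>UNIV. \<mu> s a * y $ (s, a))"
proof -
  have "(Pi_mat \<mu> *v y) $ s = (\<Sum>sa\<in>UNIV. (if fst sa = s then \<mu> s (snd sa) else 0) * y $ sa)"
    by (simp add: Pi_mat_def matrix_vector_mult_def)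
  also have "\<dots> = (\<Sum>s'\<in>UNIV. \<Sum>a\<in>UNIV. (if s' = s then \<mu> s a else 0) * y $ (s', a))"
    by (simp add: sum.cartesian_product split_def)
  also have "\<dots> = (\<Sum>a\<in>UNIV. \<mu> s a * y $ (s, a))"
    by (subst sum.swap) (simp add: if_distrib[of "\<lambda>x. x * _"] sum.delta cong: if_cong)
  finally show ?thesis .
qed

lemma Pi_mat_Vtheta_diff_policy:
  "Pi_mat (Vtheta_diff_policy \<Phi> \<theta> \<theta>b) *v (\<Phi> *v (\<theta> - \<theta>b)) = Vtheta \<Phi> \<theta> - Vtheta \<Phi> \<theta>b"
proof -
  have "(\<Phi> *v x) $ sa = (\<Phi> $ sa) \<bullet> x" for x sa
    by (simp add: matrix_vector_mult_def inner_vec_def mult.commute)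
  then show ?thesis
    by (simp add: vec_eq_iff Pi_mat_mult_vec Vtheta_diff_policy)
qed

lemma Tmap_diff_eq_Amat:
  assumes "Pi_mat \<mu> *v (\<Phi> *v (\<theta> - \<theta>b)) = Vtheta \<Phi> \<theta> - Vtheta \<Phi> \<theta>b"
  shows "Tmap \<Phi> d P R \<gamma> \<alpha> \<theta> - Tmap \<Phi> d P R \<gamma> \<alpha> \<theta>b = Amat \<Phi> d P \<gamma> \<alpha> \<mu> *v (\<theta> - \<theta>b)"
proof -
  define G where "G = transpose \<Phi> ** diag_mat d"
  have "Amat \<Phi> d P \<gamma> \<alpha> \<mu> *v (\<theta> - \<theta>b) = (\<theta> - \<theta>b) - \<alpha> *\<^sub>R (G *v (\<Phi> *v (\<theta> - \<theta>b)))
      + (\<alpha> * \<gamma>) *\<^sub>R (G *v (P *v (Pi_mat \<mu> *v (\<Phi> *v (\<theta> - \<theta>b)))))"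
    unfolding Amat_def G_def
    by (simp add: matrix_vector_mult_add_rdistrib matrix_vector_mult_diff_rdistrib
        scaleR_matrix_vector_assoc[symmetric] matrix_vector_mul_assoc matrix_mul_assoc)
  also have "\<dots> = Tmap \<Phi> d P R \<gamma> \<alpha> \<theta> - Tmap \<Phi> d P R \<gamma> \<alpha> \<theta>b"
    unfolding assms Tmap_def gmap_def G_def[symmetric] by (simp add: algebra_simps)
  finally show ?thesis by simp
qed

lemma Tmap_diff_eq_Amat_Vtheta_diff_policy:
  "Tmap \<Phi> d P R \<gamma> \<alpha> \<theta> - Tmap \<Phi> d P R \<gamma> \<alpha> \<theta>b
     = Amat \<Phi> d P \<gamma> \<alpha> (Vtheta_diff_policy \<Phi> \<theta> \<theta>b) *v (\<theta> - \<theta>b)"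
  by (rule Tmap_diff_eq_Amat[OF Pi_mat_Vtheta_diff_policy])

text \<open>The identity is purely algebraic.\<close>
theorem proposition1:
  fixes \<Phi> :: "real ^ 'm::finite ^ ('s::finite \<times> 'a::finite)"
    and P :: "real ^ 's ^ ('s \<times> 'a)"
    and R d :: "real ^ ('s \<times> 'a)"
    and \<gamma> \<alpha> :: real
  assumes P: "transition_matrix P"
    and gamma: "0 < \<gamma>" "\<gamma> < 1"
    and alpha: "0 < \<alpha>" "\<alpha> < 1"
    and d_pos: "\<forall>sa. 0 < d $ sa"
    and rank: "rank \<Phi> = CARD('m)"
  shows "(\<forall>\<theta> \<theta>b. \<exists>\<mu>. stochastic_policy \<mu> \<and>
            Tmap \<Phi> d P R \<gamma> \<alpha> \<theta> - Tmap \<Phi> d P R \<gamma> \<alpha> \<theta>b = Amat \<Phi> d P \<gamma> \<alpha> \<mu> *v (\<theta> - \<theta>b))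
       \<and> (\<exists>M :: real ^ 'm \<Rightarrow> real ^ 'm \<Rightarrow> ('s \<Rightarrow> 'a \<Rightarrow> real).
            (\<forall>s a. (\<lambda>p. M (fst p) (snd p) s a) \<in> borel_measurable borel) \<and>
            (\<forall>\<theta> \<theta>b. stochastic_policy (M \<theta> \<theta>b)) \<and>
            (\<forall>\<theta>star (\<theta>seq :: nat \<Rightarrow> real ^ 'm).
               gmap \<Phi> d P R \<gamma> \<theta>star = 0 \<longrightarrow>
               (\<forall>k. \<theta>seq (Suc k) = Tmap \<Phi> d P R \<gamma> \<alpha> (\<theta>seq k)) \<longrightarrow>
               (\<forall>k. \<theta>seq (Suc k) - \<theta>star
                      = Amat \<Phi> d P \<gamma> \<alpha> (M (\<theta>seq k) \<theta>star) *v (\<theta>seq k - \<theta>star))))"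
proof (intro conjI allI impI exI[of _ "Vtheta_diff_policy \<Phi>"])
  fix \<theta> \<theta>b
  show "\<exists>\<mu>. stochastic_policy \<mu> \<and>
          Tmap \<Phi> d P R \<gamma> \<alpha> \<theta> - Tmap \<Phi> d P R \<gamma> \<alpha> \<theta>b = Amat \<Phi> d P \<gamma> \<alpha> \<mu> *v (\<theta> - \<theta>b)"
    using stochastic_policy_Vtheta_diff_policy Tmap_diff_eq_Amat_Vtheta_diff_policy by blast
next
  fix s a
  show "(\<lambda>p. Vtheta_diff_policy \<Phi> (fst p) (snd p) s a) \<in> borel_measurable borel"
    by (rule borel_measurable_Vtheta_diff_policy)
next
  fix \<theta> \<theta>b
  show "stochastic_policy (Vtheta_diff_policy \<Phi> \<theta> \<theta>b)"
    by (rule stochastic_policy_Vtheta_diff_policy)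
next
  fix \<theta>star and \<theta>seq :: "nat \<Rightarrow> real ^ 'm" and k
  assume "gmap \<Phi> d P R \<gamma> \<theta>star = 0" and "\<forall>k. \<theta>seq (Suc k) = Tmap \<Phi> d P R \<gamma> \<alpha> (\<theta>seq k)"
  then have "\<theta>seq (Suc k) - \<theta>star = Tmap \<Phi> d P R \<gamma> \<alpha> (\<theta>seq k) - Tmap \<Phi> d P R \<gamma> \<alpha> \<theta>star"
    by (simp add: Tmap_def)
  then show "\<theta>seq (Suc k) - \<theta>star
      = Amat \<Phi> d P \<gamma> \<alpha> (Vtheta_diff_policy \<Phi> (\<theta>seq k) \<theta>star) *v (\<theta>seq k - \<theta>star)"
    by (simp add: Tmap_diff_eq_Amat_Vtheta_diff_policy)
qed

end
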